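(* Let $\mathbb{A}$ be a monoidal category and $\mathbb{X}$ a right $\mathbb{A}$-enriched category. Fix $X\in\mathbb{X}$, $A\in\mathbb{A}$ and an object $X\lhd A\in\mathbb{X}$, and suppose given, for all $B\in\mathbb{A}$ and $Y\in\mathbb{X}$, mutually inverse bijections $(-)^\Downarrow$ from morphisms $f:B\to\mathrm{Hom}(X\lhd A,Y)$ to morphisms $A\otimes B\to\mathrm{Hom}(X,Y)$ and $(-)^\Uparrow$ in the reverse direction. Then the following are equivalent: (i) there exists $\eta:A\to\mathrm{Hom}(X,X\lhd A)$ such that $(f)^\Downarrow=(\eta\otimes f)m$ for all such $f$; (ii) for all morphisms of the appropriate types: (a) $(1\otimes h)(f)^\Downarrow=(hf)^\Downarrow$; (b) $h(g)^\Uparrow=((1\otimes h)g)^\Uparrow$; (c) $((f)^\Downarrow\otimes g)m=a_\otimes((f\otimes g)m)^\Downarrow$; (d) $((f)^\Uparrow\otimes g)m=(a_\otimes(f\otimes g)m)^\Uparrow$. Here in (a) $h:B'\to B$, $f:B\to\mathrm{Hom}(X\lhd A,Y)$; in (b) $h:B'\to B$, $g:A\otimes B\to\mathrm{Hom}(X,Y)$; in (c) $f:B\to\mathrm{Hom}(X\lhd A,Y)$, $g:C\to\mathrm{Hom}(Y,Z)$; in (d) $f:A\otimes B\to\mathrm{Hom}(X,Y)$, $g:C\to\mathrm{Hom}(Y,Z)$; and $a_\otimes:(A\otimes B)\otimes C\to A\otimes(B\otimes C)$ is the associativity isomorphism.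
   Context: Composition is written in diagrammatic order: $fg$ means first $f$ then $g$. $\mathbb{A}$ is monoidal with tensor $\otimes$, unit $I$, associator $a_\otimes$ and unitors $u^L_\otimes:I\otimes A\to A$, $u^R_\otimes:A\otimes I\to A$. A right $\mathbb{A}$-enriched category $\mathbb{X}$ has hom-objects $\mathrm{Hom}(X,Y)\in\mathbb{A}$, composition morphisms $m=m_{XYZ}:\mathrm{Hom}(X,Y)\otimes\mathrm{Hom}(Y,Z)\to\mathrm{Hom}(X,Z)$ and units $id_X:I\to\mathrm{Hom}(X,X)$ satisfying the associativity law $(m\otimes1)m=a_\otimes(1\otimes m)m$ and unit laws $(id\otimes1)m=u^L_\otimes$, $(1\otimes id)m=u^R_\otimes$. *)

theory Defs
  imports Main
begin

text \<open>Categories are given by a set of arrows (predicate Arr), source/target maps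
  Dom/Cod, composition Cmp written in DIAGRAMMATIC order (Cmp f g = "first f then g")
  and identities Idn.\<close>

locale category =
  fixes Arr :: "'m \<Rightarrow> bool"
    and Dom :: "'m \<Rightarrow> 'o"
    and Cod :: "'m \<Rightarrow> 'o"
    and Cmp :: "'m \<Rightarrow> 'm \<Rightarrow> 'm"
    and Idn :: "'o \<Rightarrow> 'm"
  assumes id_arr: "Arr (Idn x)" and id_dom: "Dom (Idn x) = x" and id_cod: "Cod (Idn x) = x"
    and cmp_arr: "\<lbrakk>Arr f; Arr g; Cod f = Dom g\<rbrakk> \<Longrightarrow> Arr (Cmp f g)"
    and cmp_dom: "\<lbrakk>Arr f; Arr g; Cod f = Dom g\<rbrakk> \<Longrightarrow> Dom (Cmp f g) = Dom f"
    and cmp_cod: "\<lbrakk>Arr f; Arr g; Cod f = Dom g\<rbrakk> \<Longrightarrow> Cod (Cmp f g) = Cod g"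
    and id_left: "Arr f \<Longrightarrow> Cmp (Idn (Dom f)) f = f"
    and id_right: "Arr f \<Longrightarrow> Cmp f (Idn (Cod f)) = f"
    and cmp_assoc: "\<lbrakk>Arr f; Arr g; Arr h; Cod f = Dom g; Cod g = Dom h\<rbrakk>
                    \<Longrightarrow> Cmp (Cmp f g) h = Cmp f (Cmp g h)"

definition hom_in :: "('m \<Rightarrow> bool) \<Rightarrow> ('m \<Rightarrow> 'o) \<Rightarrow> ('m \<Rightarrow> 'o) \<Rightarrow> 'm \<Rightarrow> 'o \<Rightarrow> 'o \<Rightarrow> bool" where
  "hom_in Arr Dom Cod f x y \<longleftrightarrow> Arr f \<and> Dom f = x \<and> Cod f = y"

definition inv_arr :: "('m \<Rightarrow> bool) \<Rightarrow> ('m \<Rightarrow> 'o) \<Rightarrow> ('m \<Rightarrow> 'o) \<Rightarrow> ('m \<Rightarrow> 'm \<Rightarrow> 'm)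
     \<Rightarrow> ('o \<Rightarrow> 'm) \<Rightarrow> 'm \<Rightarrow> 'm" where
  "inv_arr Arr Dom Cod Cmp Idn f = (THE g. hom_in Arr Dom Cod g (Cod f) (Dom f)
      \<and> Cmp f g = Idn (Dom f) \<and> Cmp g f = Idn (Cod f))"

definition is_iso :: "('m \<Rightarrow> bool) \<Rightarrow> ('m \<Rightarrow> 'o) \<Rightarrow> ('m \<Rightarrow> 'o) \<Rightarrow> ('m \<Rightarrow> 'm \<Rightarrow> 'm)
     \<Rightarrow> ('o \<Rightarrow> 'm) \<Rightarrow> 'm \<Rightarrow> bool" where
  "is_iso Arr Dom Cod Cmp Idn f \<longleftrightarrow> Arr f \<and> (\<exists>g. hom_in Arr Dom Cod g (Cod f) (Dom f)
      \<and> Cmp f g = Idn (Dom f) \<and> Cmp g f = Idn (Cod f))"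

locale monoidal_category = category Arr Dom Cod Cmp Idn
  for Arr :: "'m \<Rightarrow> bool"
    and Dom :: "'m \<Rightarrow> 'o"
    and Cod :: "'m \<Rightarrow> 'o"
    and Cmp :: "'m \<Rightarrow> 'm \<Rightarrow> 'm"
    and Idn :: "'o \<Rightarrow> 'm" +
  fixes Tob :: "'o \<Rightarrow> 'o \<Rightarrow> 'o"
    and Tm :: "'m \<Rightarrow> 'm \<Rightarrow> 'm"
    and Unit :: "'o"
    and Assoc :: "'o \<Rightarrow> 'o \<Rightarrow> 'o \<Rightarrow> 'm"
    and UL :: "'o \<Rightarrow> 'm"
    and UR :: "'o \<Rightarrow> 'm"
  assumes tm_hom: "\<lbrakk>Arr f; Arr g\<rbrakk> \<Longrightarrow> hom_in Arr Dom Cod (Tm f g) (Tob (Dom f) (Dom g)) (Tob (Cod f) (Cod g))"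
    and tm_id: "Tm (Idn x) (Idn y) = Idn (Tob x y)"
    and tm_cmp: "\<lbrakk>Arr f; Arr f'; Arr g; Arr g'; Cod f = Dom f'; Cod g = Dom g'\<rbrakk>
                 \<Longrightarrow> Tm (Cmp f f') (Cmp g g') = Cmp (Tm f g) (Tm f' g')"
    and assoc_hom: "hom_in Arr Dom Cod (Assoc x y z) (Tob (Tob x y) z) (Tob x (Tob y z))"
    and assoc_iso: "is_iso Arr Dom Cod Cmp Idn (Assoc x y z)"
    and assoc_nat: "\<lbrakk>Arr f; Arr g; Arr h\<rbrakk> \<Longrightarrow>
        Cmp (Tm (Tm f g) h) (Assoc (Cod f) (Cod g) (Cod h)) = Cmp (Assoc (Dom f) (Dom g) (Dom h)) (Tm f (Tm g h))"
    and ul_hom: "hom_in Arr Dom Cod (UL x) (Tob Unit x) x"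
    and ul_iso: "is_iso Arr Dom Cod Cmp Idn (UL x)"
    and ul_nat: "Arr f \<Longrightarrow> Cmp (Tm (Idn Unit) f) (UL (Cod f)) = Cmp (UL (Dom f)) f"
    and ur_hom: "hom_in Arr Dom Cod (UR x) (Tob x Unit) x"
    and ur_iso: "is_iso Arr Dom Cod Cmp Idn (UR x)"
    and ur_nat: "Arr f \<Longrightarrow> Cmp (Tm f (Idn Unit)) (UR (Cod f)) = Cmp (UR (Dom f)) f"
    and pentagon: "Cmp (Tm (Assoc w x y) (Idn z)) (Cmp (Assoc w (Tob x y) z) (Tm (Idn w) (Assoc x y z)))
                   = Cmp (Assoc (Tob w x) y z) (Assoc w x (Tob y z))"
    and triangle: "Cmp (Assoc x Unit y) (Tm (Idn x) (UL y)) = Tm (UR x) (Idn y)"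

locale enriched_category = monoidal_category Arr Dom Cod Cmp Idn Tob Tm Unit Assoc UL UR
  for Arr :: "'m \<Rightarrow> bool"
    and Dom :: "'m \<Rightarrow> 'o"
    and Cod :: "'m \<Rightarrow> 'o"
    and Cmp :: "'m \<Rightarrow> 'm \<Rightarrow> 'm"
    and Idn :: "'o \<Rightarrow> 'm"
    and Tob :: "'o \<Rightarrow> 'o \<Rightarrow> 'o"
    and Tm :: "'m \<Rightarrow> 'm \<Rightarrow> 'm"
    and Unit :: "'o"
    and Assoc :: "'o \<Rightarrow> 'o \<Rightarrow> 'o \<Rightarrow> 'm"
    and UL :: "'o \<Rightarrow> 'm"
    and UR :: "'o \<Rightarrow> 'm" +
  fixes Hom :: "'x \<Rightarrow> 'x \<Rightarrow> 'o"
    and Mc :: "'x \<Rightarrow> 'x \<Rightarrow> 'x \<Rightarrow> 'm"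
    and Ide :: "'x \<Rightarrow> 'm"
  assumes mc_hom: "hom_in Arr Dom Cod (Mc X Y Z) (Tob (Hom X Y) (Hom Y Z)) (Hom X Z)"
    and ide_hom: "hom_in Arr Dom Cod (Ide X) Unit (Hom X X)"
    and mc_assoc: "Cmp (Tm (Mc W X Y) (Idn (Hom Y Z))) (Mc W Y Z)
        = Cmp (Assoc (Hom W X) (Hom X Y) (Hom Y Z)) (Cmp (Tm (Idn (Hom W X)) (Mc X Y Z)) (Mc W X Z))"
    and mc_unit_left: "Cmp (Tm (Ide X) (Idn (Hom X Y))) (Mc X X Y) = UL (Hom X Y)"
    and mc_unit_right: "Cmp (Tm (Idn (Hom X Y)) (Ide Y)) (Mc X Y Y) = UR (Hom X Y)"

end

(* If (-)\<^sup>\<Down> is given by precomposition with \<eta>, then (a) is the interchange law and (c)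
   is associativity of enriched composition; (b) and (d) are (a) and (c) transported along
   the bijection. Conversely, put \<eta> = \<rho>\<inverse> (id\<^bsub>X\<lhd>A\<^esub>)\<^sup>\<Down>. By the left unit law every
   f : B \<rightarrow> Hom(X\<lhd>A, Y) factors as \<lambda>\<inverse> ((id \<otimes> f) m); (a) moves \<lambda>\<inverse> out of the
   transpose and (c) rewrites ((id \<otimes> f) m)\<^sup>\<Down> through (id)\<^sup>\<Down>, and the triangle identity
   turns the resulting (1 \<otimes> \<lambda>\<inverse>) a\<inverse> into \<rho>\<inverse> \<otimes> 1, giving f\<^sup>\<Down> = (\<eta> \<otimes> f) m. *)

theory Submission
  imports Defs
begin

context category begin

lemma cmp_ty [simp]:
  assumes "Arr f" "Arr g" "Cod f = Dom g"
  shows "Arr (Cmp f g)" "Dom (Cmp f g) = Dom f" "Cod (Cmp f g) = Cod g"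
  using assms cmp_arr cmp_dom cmp_cod by auto

lemma idn_ty [simp]: "Arr (Idn x)" "Dom (Idn x) = x" "Cod (Idn x) = x"
  using id_arr id_dom id_cod by auto

lemma cmp_idn_left [simp]: "Arr f \<Longrightarrow> Dom f = x \<Longrightarrow> Cmp (Idn x) f = f"
  using id_left by auto

lemma cmp_idn_right [simp]: "Arr f \<Longrightarrow> Cod f = x \<Longrightarrow> Cmp f (Idn x) = f"
  using id_right by auto

lemma left_inverse_eq_right_inverse:
  assumes "Arr r" "Arr t" "Arr l" "Cod r = Dom t" "Cod t = Dom l"
    and "Cmp r t = Idn (Dom r)" "Cmp t l = Idn (Dom t)"
  shows "r = l"
proof -
  have "Cod t = Dom r" using assms(1,2,4,6) idn_ty(3) cmp_cod by metis
  have "r = Cmp r (Cmp t l)" using assms by simp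
  also have "\<dots> = Cmp (Cmp r t) l" using assms(1-5) by (rule cmp_assoc[symmetric])
  also have "\<dots> = l" using assms \<open>Cod t = Dom r\<close> by simp
  finally show ?thesis .
qed

lemma inv_arr_props:
  assumes "is_iso Arr Dom Cod Cmp Idn f"
  defines "g \<equiv> inv_arr Arr Dom Cod Cmp Idn f"
  shows "Arr g" "Dom g = Cod f" "Cod g = Dom f"
    and "Cmp f g = Idn (Dom f)" "Cmp g f = Idn (Cod f)"
proof -
  let ?inverse = "\<lambda>g. hom_in Arr Dom Cod g (Cod f) (Dom f)
      \<and> Cmp f g = Idn (Dom f) \<and> Cmp g f = Idn (Cod f)"
  have "Arr f" using assms unfolding is_iso_def by blast
  obtain g0 where "?inverse g0"
    using assms unfolding is_iso_def by blast
  moreover have "g' = g0" if "?inverse g'" for g'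
    using that \<open>?inverse g0\<close> \<open>Arr f\<close> left_inverse_eq_right_inverse[of g' f g0]
    unfolding hom_in_def by auto
  ultimately have "?inverse g"
    unfolding g_def inv_arr_def by (rule theI)
  then show "Arr g" "Dom g = Cod f" "Cod g = Dom f"
    and "Cmp f g = Idn (Dom f)" "Cmp g f = Idn (Cod f)"
    unfolding hom_in_def by auto
qed

lemma iso_cancel_left:
  assumes "is_iso Arr Dom Cod Cmp Idn f" "Arr g" "Dom g = Cod f" "Cmp f g = k"
  shows "g = Cmp (inv_arr Arr Dom Cod Cmp Idn f) k"
  using assms inv_arr_props[OF assms(1)] is_iso_def
  by (metis cmp_assoc cmp_idn_left)

end

context monoidal_category begin

lemma tm_ty [simp]:
  assumes "Arr f" "Arr g"
  shows "Arr (Tm f g)" "Dom (Tm f g) = Tob (Dom f) (Dom g)" "Cod (Tm f g) = Tob (Cod f) (Cod g)"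
  using tm_hom[OF assms] unfolding hom_in_def by auto

lemma assoc_ty [simp]:
  "Arr (Assoc x y z)" "Dom (Assoc x y z) = Tob (Tob x y) z" "Cod (Assoc x y z) = Tob x (Tob y z)"
  using assoc_hom unfolding hom_in_def by auto

lemma ul_ty [simp]: "Arr (UL x)" "Dom (UL x) = Tob Unit x" "Cod (UL x) = x"
  using ul_hom unfolding hom_in_def by auto

lemma ur_ty [simp]: "Arr (UR x)" "Dom (UR x) = Tob x Unit" "Cod (UR x) = x"
  using ur_hom unfolding hom_in_def by auto

abbreviation assoc_inv :: "'o \<Rightarrow> 'o \<Rightarrow> 'o \<Rightarrow> 'm"
  where "assoc_inv x y z \<equiv> inv_arr Arr Dom Cod Cmp Idn (Assoc x y z)"

abbreviation ul_inv :: "'o \<Rightarrow> 'm"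
  where "ul_inv x \<equiv> inv_arr Arr Dom Cod Cmp Idn (UL x)"

abbreviation ur_inv :: "'o \<Rightarrow> 'm"
  where "ur_inv x \<equiv> inv_arr Arr Dom Cod Cmp Idn (UR x)"

lemma assoc_inv_ty [simp]:
  "Arr (assoc_inv x y z)" "Dom (assoc_inv x y z) = Tob x (Tob y z)"
  "Cod (assoc_inv x y z) = Tob (Tob x y) z"
  using inv_arr_props[OF assoc_iso[of x y z]] by auto

lemma ul_inv_props [simp]:
  "Arr (ul_inv x)" "Dom (ul_inv x) = x" "Cod (ul_inv x) = Tob Unit x"
  "Cmp (UL x) (ul_inv x) = Idn (Tob Unit x)"
  using inv_arr_props[OF ul_iso[of x]] by auto

lemma ur_inv_props [simp]:
  "Arr (ur_inv x)" "Dom (ur_inv x) = x" "Cod (ur_inv x) = Tob x Unit"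
  "Cmp (ur_inv x) (UR x) = Idn x"
  using inv_arr_props[OF ur_iso[of x]] by auto

lemma triangle_inv:
  "Cmp (Tm (Idn x) (ul_inv y)) (assoc_inv x Unit y) = Tm (ur_inv x) (Idn y)"
proof (rule sym, rule left_inverse_eq_right_inverse[where t = "Tm (UR x) (Idn y)"])
  show "Cmp (Tm (ur_inv x) (Idn y)) (Tm (UR x) (Idn y)) = Idn (Dom (Tm (ur_inv x) (Idn y)))"
    by (simp flip: tm_cmp add: tm_id)
  have "Cmp (Tm (UR x) (Idn y)) (Cmp (Tm (Idn x) (ul_inv y)) (assoc_inv x Unit y))
      = Cmp (Assoc x Unit y) (Cmp (Cmp (Tm (Idn x) (UL y)) (Tm (Idn x) (ul_inv y))) (assoc_inv x Unit y))"
    by (simp flip: triangle add: cmp_assoc)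
  also have "\<dots> = Cmp (Assoc x Unit y) (assoc_inv x Unit y)"
    by (simp flip: tm_cmp add: tm_id)
  also have "\<dots> = Idn (Dom (Tm (UR x) (Idn y)))"
    using inv_arr_props(4)[OF assoc_iso[of x Unit y]] by simp
  finally show "Cmp (Tm (UR x) (Idn y)) (Cmp (Tm (Idn x) (ul_inv y)) (assoc_inv x Unit y))
      = Idn (Dom (Tm (UR x) (Idn y)))" .
qed simp_all

end

context enriched_category begin

lemma mc_ty [simp]:
  "Arr (Mc X Y Z)" "Dom (Mc X Y Z) = Tob (Hom X Y) (Hom Y Z)" "Cod (Mc X Y Z) = Hom X Z"
  using mc_hom unfolding hom_in_def by auto

lemma ide_ty [simp]: "Arr (Ide X)" "Dom (Ide X) = Unit" "Cod (Ide X) = Hom X X"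
  using ide_hom unfolding hom_in_def by auto

lemma mc_ide_left:
  assumes "Arr f" "Cod f = Hom X Y"
  shows "Cmp (Tm (Ide X) f) (Mc X X Y) = Cmp (UL (Dom f)) f"
proof -
  have "Tm (Ide X) f = Cmp (Tm (Idn Unit) f) (Tm (Ide X) (Idn (Hom X Y)))"
    using assms tm_cmp[of "Idn Unit" "Ide X" f "Idn (Hom X Y)"] by simp
  then have "Cmp (Tm (Ide X) f) (Mc X X Y) = Cmp (Tm (Idn Unit) f) (UL (Hom X Y))"
    using assms by (simp add: cmp_assoc mc_unit_left)
  then show ?thesis
    using assms ul_nat[of f] by simp
qed

lemma mc_tm_assoc:
  assumes e: "Arr e" "Cod e = Hom W X"
    and f: "Arr f" "Cod f = Hom X Y"
    and g: "Arr g" "Cod g = Hom Y Z"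
  shows "Cmp (Tm (Cmp (Tm e f) (Mc W X Y)) g) (Mc W Y Z)
       = Cmp (Assoc (Dom e) (Dom f) (Dom g)) (Cmp (Tm e (Cmp (Tm f g) (Mc X Y Z))) (Mc W X Z))"
proof -
  have "Cmp (Tm (Cmp (Tm e f) (Mc W X Y)) g) (Mc W Y Z)
      = Cmp (Tm (Tm e f) g) (Cmp (Tm (Mc W X Y) (Idn (Hom Y Z))) (Mc W Y Z))"
    using assms tm_cmp[of "Tm e f" "Mc W X Y" g "Idn (Hom Y Z)"] by (simp add: cmp_assoc)
  also have "\<dots> = Cmp (Cmp (Tm (Tm e f) g) (Assoc (Hom W X) (Hom X Y) (Hom Y Z)))
      (Cmp (Tm (Idn (Hom W X)) (Mc X Y Z)) (Mc W X Z))"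
    using assms by (simp add: mc_assoc cmp_assoc)
  also have "\<dots> = Cmp (Assoc (Dom e) (Dom f) (Dom g))
      (Cmp (Cmp (Tm e (Tm f g)) (Tm (Idn (Hom W X)) (Mc X Y Z))) (Mc W X Z))"
    using assms assoc_nat[of e f g] by (simp add: cmp_assoc)
  also have "\<dots> = Cmp (Assoc (Dom e) (Dom f) (Dom g)) (Cmp (Tm e (Cmp (Tm f g) (Mc X Y Z))) (Mc W X Z))"
    using assms tm_cmp[of e "Idn (Hom W X)" "Tm f g" "Mc X Y Z"] by simp
  finally show ?thesis .
qed

end

locale hom_transposition = enriched_category Arr Dom Cod Cmp Idn Tob Tm Unit Assoc UL UR Hom Mc Ide
  for Arr :: "'m \<Rightarrow> bool" and Dom Cod :: "'m \<Rightarrow> 'o"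
    and Cmp :: "'m \<Rightarrow> 'm \<Rightarrow> 'm" and Idn :: "'o \<Rightarrow> 'm"
    and Tob :: "'o \<Rightarrow> 'o \<Rightarrow> 'o" and Tm :: "'m \<Rightarrow> 'm \<Rightarrow> 'm" and Unit :: 'o
    and Assoc :: "'o \<Rightarrow> 'o \<Rightarrow> 'o \<Rightarrow> 'm" and UL UR :: "'o \<Rightarrow> 'm"
    and Hom :: "'x \<Rightarrow> 'x \<Rightarrow> 'o" and Mc :: "'x \<Rightarrow> 'x \<Rightarrow> 'x \<Rightarrow> 'm" and Ide :: "'x \<Rightarrow> 'm" +
  fixes X XA :: 'x and A :: 'o
    and down :: "'o \<Rightarrow> 'x \<Rightarrow> 'm \<Rightarrow> 'm" and up :: "'o \<Rightarrow> 'x \<Rightarrow> 'm \<Rightarrow> 'm"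
  assumes down_hom: "\<And>B Y f. hom_in Arr Dom Cod f B (Hom XA Y) \<Longrightarrow>
                      hom_in Arr Dom Cod (down B Y f) (Tob A B) (Hom X Y)"
    and up_hom: "\<And>B Y g. hom_in Arr Dom Cod g (Tob A B) (Hom X Y) \<Longrightarrow>
                      hom_in Arr Dom Cod (up B Y g) B (Hom XA Y)"
    and up_down: "\<And>B Y f. hom_in Arr Dom Cod f B (Hom XA Y) \<Longrightarrow> up B Y (down B Y f) = f"
    and down_up: "\<And>B Y g. hom_in Arr Dom Cod g (Tob A B) (Hom X Y) \<Longrightarrow> down B Y (up B Y g) = g"
begin

definition represents :: "'m \<Rightarrow> bool" where
  "represents \<eta> \<longleftrightarrow> hom_in Arr Dom Cod \<eta> A (Hom X XA) \<and>
     (\<forall>B Y f. hom_in Arr Dom Cod f B (Hom XA Y) \<longrightarrow> down B Y f = Cmp (Tm \<eta> f) (Mc X XA Y))"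

definition down_natural :: bool where
  "down_natural \<longleftrightarrow>
     (\<forall>B B' Y h f. hom_in Arr Dom Cod h B' B \<and> hom_in Arr Dom Cod f B (Hom XA Y) \<longrightarrow>
        Cmp (Tm (Idn A) h) (down B Y f) = down B' Y (Cmp h f))"

definition up_natural :: bool where
  "up_natural \<longleftrightarrow>
     (\<forall>B B' Y h g. hom_in Arr Dom Cod h B' B \<and> hom_in Arr Dom Cod g (Tob A B) (Hom X Y) \<longrightarrow>
        Cmp h (up B Y g) = up B' Y (Cmp (Tm (Idn A) h) g))"

definition down_mc_compatible :: bool where
  "down_mc_compatible \<longleftrightarrow>
     (\<forall>B C Y Z f g. hom_in Arr Dom Cod f B (Hom XA Y) \<and> hom_in Arr Dom Cod g C (Hom Y Z) \<longrightarrow>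
        Cmp (Tm (down B Y f) g) (Mc X Y Z)
          = Cmp (Assoc A B C) (down (Tob B C) Z (Cmp (Tm f g) (Mc XA Y Z))))"

definition up_mc_compatible :: bool where
  "up_mc_compatible \<longleftrightarrow>
     (\<forall>B C Y Z f g. hom_in Arr Dom Cod f (Tob A B) (Hom X Y) \<and> hom_in Arr Dom Cod g C (Hom Y Z) \<longrightarrow>
        Cmp (Tm (up B Y f) g) (Mc XA Y Z)
          = up (Tob B C) Z (Cmp (assoc_inv A B C) (Cmp (Tm f g) (Mc X Y Z))))"

lemma down_ty [simp]:
  assumes "Arr f" "Dom f = B" "Cod f = Hom XA Y"
  shows "Arr (down B Y f)" "Dom (down B Y f) = Tob A B" "Cod (down B Y f) = Hom X Y"
  using assms down_hom[of f B Y] unfolding hom_in_def by auto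

lemma up_ty [simp]:
  assumes "Arr g" "Dom g = Tob A B" "Cod g = Hom X Y"
  shows "Arr (up B Y g)" "Dom (up B Y g) = B" "Cod (up B Y g) = Hom XA Y"
  using assms up_hom[of g B Y] unfolding hom_in_def by auto

lemma up_down_cancel [simp]: "Arr f \<Longrightarrow> Dom f = B \<Longrightarrow> Cod f = Hom XA Y \<Longrightarrow> up B Y (down B Y f) = f"
  using up_down unfolding hom_in_def by auto

lemma down_up_cancel [simp]: "Arr g \<Longrightarrow> Dom g = Tob A B \<Longrightarrow> Cod g = Hom X Y \<Longrightarrow> down B Y (up B Y g) = g"
  using down_up unfolding hom_in_def by auto

lemma representsD:
  assumes "represents \<eta>"
  shows "Arr \<eta>" "Dom \<eta> = A" "Cod \<eta> = Hom X XA"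
    and "\<And>B Y f. Arr f \<Longrightarrow> Dom f = B \<Longrightarrow> Cod f = Hom XA Y \<Longrightarrow>
           down B Y f = Cmp (Tm \<eta> f) (Mc X XA Y)"
  using assms unfolding represents_def hom_in_def by auto

lemma down_naturalD:
  assumes down_natural "Arr h" "Dom h = B'" "Cod h = B" "Arr f" "Dom f = B" "Cod f = Hom XA Y"
  shows "Cmp (Tm (Idn A) h) (down B Y f) = down B' Y (Cmp h f)"
  using assms unfolding down_natural_def hom_in_def by blast

lemma down_mc_compatibleD:
  assumes down_mc_compatible "Arr f" "Dom f = B" "Cod f = Hom XA Y" "Arr g" "Dom g = C" "Cod g = Hom Y Z"
  shows "Cmp (Tm (down B Y f) g) (Mc X Y Z)
       = Cmp (Assoc A B C) (down (Tob B C) Z (Cmp (Tm f g) (Mc XA Y Z)))"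
  using assms unfolding down_mc_compatible_def hom_in_def by blast

lemma represents_imp_down_natural:
  assumes "represents \<eta>"
  shows down_natural
  unfolding down_natural_def hom_in_def
proof (intro allI impI, elim conjE)
  fix B B' Y h f
  assume h: "Arr h" "Dom h = B'" "Cod h = B" and f: "Arr f" "Dom f = B" "Cod f = Hom XA Y"
  note \<eta> = representsD[OF assms]
  have "Cmp (Tm (Idn A) h) (down B Y f) = Cmp (Cmp (Tm (Idn A) h) (Tm \<eta> f)) (Mc X XA Y)"
    using h f \<eta> by (simp add: cmp_assoc)
  also have "\<dots> = Cmp (Tm \<eta> (Cmp h f)) (Mc X XA Y)"
    using h f \<eta> tm_cmp[of "Idn A" \<eta> h f] by simp
  also have "\<dots> = down B' Y (Cmp h f)"
    using h f \<eta> by simp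
  finally show "Cmp (Tm (Idn A) h) (down B Y f) = down B' Y (Cmp h f)" .
qed

lemma down_natural_imp_up_natural:
  assumes down_natural
  shows up_natural
  unfolding up_natural_def hom_in_def
proof (intro allI impI, elim conjE)
  fix B B' Y h g
  assume h: "Arr h" "Dom h = B'" "Cod h = B" and g: "Arr g" "Dom g = Tob A B" "Cod g = Hom X Y"
  have "down B' Y (Cmp h (up B Y g)) = Cmp (Tm (Idn A) h) g"
    using down_naturalD[OF assms h, of "up B Y g" Y] g by simp
  then have "up B' Y (Cmp (Tm (Idn A) h) g) = up B' Y (down B' Y (Cmp h (up B Y g)))"
    by simp
  also have "\<dots> = Cmp h (up B Y g)"
    using h g by simp
  finally show "Cmp h (up B Y g) = up B' Y (Cmp (Tm (Idn A) h) g)" ..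
qed

lemma represents_imp_down_mc_compatible:
  assumes "represents \<eta>"
  shows down_mc_compatible
  unfolding down_mc_compatible_def hom_in_def
proof (intro allI impI, elim conjE)
  fix B C Y Z f g
  assume f: "Arr f" "Dom f = B" "Cod f = Hom XA Y" and g: "Arr g" "Dom g = C" "Cod g = Hom Y Z"
  note \<eta> = representsD[OF assms]
  show "Cmp (Tm (down B Y f) g) (Mc X Y Z)
      = Cmp (Assoc A B C) (down (Tob B C) Z (Cmp (Tm f g) (Mc XA Y Z)))"
    using f g \<eta> mc_tm_assoc[of \<eta> X XA f Y g Z] by simp
qed

lemma down_mc_compatible_imp_up_mc_compatible:
  assumes down_mc_compatible
  shows up_mc_compatible
  unfolding up_mc_compatible_def hom_in_def
proof (intro allI impI, elim conjE)
  fix B C Y Z f g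
  assume f: "Arr f" "Dom f = Tob A B" "Cod f = Hom X Y" and g: "Arr g" "Dom g = C" "Cod g = Hom Y Z"
  let ?u = "Cmp (Tm (up B Y f) g) (Mc XA Y Z)"
  have "Cmp (Assoc A B C) (down (Tob B C) Z ?u) = Cmp (Tm f g) (Mc X Y Z)"
    using down_mc_compatibleD[OF assms, of "up B Y f" B Y g C Z] f g by simp
  then have "down (Tob B C) Z ?u = Cmp (assoc_inv A B C) (Cmp (Tm f g) (Mc X Y Z))"
    using f g by (intro iso_cancel_left assoc_iso) simp_all
  then have "up (Tob B C) Z (down (Tob B C) Z ?u)
      = up (Tob B C) Z (Cmp (assoc_inv A B C) (Cmp (Tm f g) (Mc X Y Z)))"
    by simp
  then show "?u = up (Tob B C) Z (Cmp (assoc_inv A B C) (Cmp (Tm f g) (Mc X Y Z)))"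
    using f g by simp
qed

lemma represents_transposed_identity:
  assumes down_natural down_mc_compatible
  shows "represents (Cmp (ur_inv A) (down Unit XA (Ide XA)))"
proof -
  define D where "D = down Unit XA (Ide XA)"
  have D: "Arr D" "Dom D = Tob A Unit" "Cod D = Hom X XA"
    unfolding D_def by simp_all
  have "down B Y f = Cmp (Tm (Cmp (ur_inv A) D) f) (Mc X XA Y)"
    if f: "Arr f" "Dom f = B" "Cod f = Hom XA Y" for B Y f
  proof -
    define k where "k = Cmp (Tm (Ide XA) f) (Mc XA XA Y)"
    have k: "Arr k" "Dom k = Tob Unit B" "Cod k = Hom XA Y"
      unfolding k_def using f by simp_all
    have "f = Cmp (ul_inv B) k"
      using f mc_ide_left[of f XA Y] unfolding k_def by (intro iso_cancel_left ul_iso) simp_all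
    then have "down B Y f = Cmp (Tm (Idn A) (ul_inv B)) (down (Tob Unit B) Y k)"
      using down_naturalD[OF assms(1), of "ul_inv B" B "Tob Unit B" k Y] f k by simp
    moreover have "down (Tob Unit B) Y k = Cmp (assoc_inv A Unit B) (Cmp (Tm D f) (Mc X XA Y))"
      using down_mc_compatibleD[OF assms(2), of "Ide XA" Unit XA f B Y] f k
      unfolding D_def k_def by (intro iso_cancel_left assoc_iso) simp_all
    ultimately have "down B Y f = Cmp (Tm (ur_inv A) (Idn B)) (Cmp (Tm D f) (Mc X XA Y))"
      using f D by (simp add: cmp_assoc flip: triangle_inv)
    then show ?thesis
      using f D tm_cmp[of "ur_inv A" D "Idn B" f] by (simp add: cmp_assoc)
  qed
  then show ?thesis
    using D unfolding represents_def hom_in_def D_def[symmetric] by simp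
qed

theorem representable_iff:
  "(\<exists>\<eta>. represents \<eta>) \<longleftrightarrow> down_natural \<and> up_natural \<and> down_mc_compatible \<and> up_mc_compatible"
  using represents_imp_down_natural down_natural_imp_up_natural
    represents_imp_down_mc_compatible down_mc_compatible_imp_up_mc_compatible
    represents_transposed_identity
  by blast

end

theorem mainTheorem4:
  fixes Arr :: "'m \<Rightarrow> bool" and Dom Cod :: "'m \<Rightarrow> 'o"
    and Cmp :: "'m \<Rightarrow> 'm \<Rightarrow> 'm" and Idn :: "'o \<Rightarrow> 'm"
    and Tob :: "'o \<Rightarrow> 'o \<Rightarrow> 'o" and Tm :: "'m \<Rightarrow> 'm \<Rightarrow> 'm" and Unit :: 'o
    and Assoc :: "'o \<Rightarrow> 'o \<Rightarrow> 'o \<Rightarrow> 'm" and UL UR :: "'o \<Rightarrow> 'm"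
    and Hom :: "'x \<Rightarrow> 'x \<Rightarrow> 'o" and Mc :: "'x \<Rightarrow> 'x \<Rightarrow> 'x \<Rightarrow> 'm" and Ide :: "'x \<Rightarrow> 'm"
    and X XA :: 'x and A :: 'o
    and down :: "'o \<Rightarrow> 'x \<Rightarrow> 'm \<Rightarrow> 'm" and up :: "'o \<Rightarrow> 'x \<Rightarrow> 'm \<Rightarrow> 'm"
  assumes enr: "enriched_category Arr Dom Cod Cmp Idn Tob Tm Unit Assoc UL UR Hom Mc Ide"
    and down_hom: "\<And>B Y f. hom_in Arr Dom Cod f B (Hom XA Y) \<Longrightarrow>
                      hom_in Arr Dom Cod (down B Y f) (Tob A B) (Hom X Y)"
    and up_hom: "\<And>B Y g. hom_in Arr Dom Cod g (Tob A B) (Hom X Y) \<Longrightarrow>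
                      hom_in Arr Dom Cod (up B Y g) B (Hom XA Y)"
    and up_down: "\<And>B Y f. hom_in Arr Dom Cod f B (Hom XA Y) \<Longrightarrow> up B Y (down B Y f) = f"
    and down_up: "\<And>B Y g. hom_in Arr Dom Cod g (Tob A B) (Hom X Y) \<Longrightarrow> down B Y (up B Y g) = g"
  shows "(\<exists>\<eta>. hom_in Arr Dom Cod \<eta> A (Hom X XA) \<and>
            (\<forall>B Y f. hom_in Arr Dom Cod f B (Hom XA Y) \<longrightarrow>
                 down B Y f = Cmp (Tm \<eta> f) (Mc X XA Y)))
     \<longleftrightarrow>
     ((\<forall>B B' Y h f. hom_in Arr Dom Cod h B' B \<and> hom_in Arr Dom Cod f B (Hom XA Y) \<longrightarrow>
          Cmp (Tm (Idn A) h) (down B Y f) = down B' Y (Cmp h f))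
    \<and> (\<forall>B B' Y h g. hom_in Arr Dom Cod h B' B \<and> hom_in Arr Dom Cod g (Tob A B) (Hom X Y) \<longrightarrow>
          Cmp h (up B Y g) = up B' Y (Cmp (Tm (Idn A) h) g))
    \<and> (\<forall>B C Y Z f g. hom_in Arr Dom Cod f B (Hom XA Y) \<and> hom_in Arr Dom Cod g C (Hom Y Z) \<longrightarrow>
          Cmp (Tm (down B Y f) g) (Mc X Y Z)
            = Cmp (Assoc A B C) (down (Tob B C) Z (Cmp (Tm f g) (Mc XA Y Z))))
    \<and> (\<forall>B C Y Z f g. hom_in Arr Dom Cod f (Tob A B) (Hom X Y) \<and> hom_in Arr Dom Cod g C (Hom Y Z) \<longrightarrow>
          Cmp (Tm (up B Y f) g) (Mc XA Y Z)
            = up (Tob B C) Z (Cmp (inv_arr Arr Dom Cod Cmp Idn (Assoc A B C)) (Cmp (Tm f g) (Mc X Y Z)))))"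
proof -
  interpret hom_transposition Arr Dom Cod Cmp Idn Tob Tm Unit Assoc UL UR Hom Mc Ide X XA A down up
    using enr down_hom up_hom up_down down_up
    by (intro hom_transposition.intro hom_transposition_axioms.intro)
  show ?thesis
    using representable_iff
    unfolding represents_def down_natural_def up_natural_def
      down_mc_compatible_def up_mc_compatible_def .
qed

end
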